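(* Let $n\ge 1$ and let $\omega\subset\mathbb{R}^n$ be a non-empty open set. Then there exists a constant $C=C(\omega)>1$ such that for every $N\in\mathbb{N}$ and every $f\in\mathcal{E}_N$, $$\|f\|_{L^2(\mathbb{R}^n)}\le C\,e^{\frac12 N\ln(N+1)+CN}\,\|f\|_{L^2(\omega)}.$$
   Context: The one-dimensional Hermite functions are $\phi_k(x)=\frac{(-1)^k}{\sqrt{2^k k!\sqrt{\pi}}}e^{x^2/2}\frac{d^k}{dx^k}(e^{-x^2})$, $k\in\mathbb{N}=\{0,1,2,\dots\}$, $x\in\mathbb{R}$. For $\alpha=(\alpha_1,\dots,\alpha_n)\in\mathbb{N}^n$ and $x\in\mathbb{R}^n$, $\Phi_\alpha(x)=\prod_{j=1}^n\phi_{\alpha_j}(x_j)$, and $|\alpha|=\alpha_1+\dots+\alpha_n$. For $N\in\mathbb{N}$, $\mathcal{E}_N=\mathrm{Span}_{\mathbb{C}}\{\Phi_\alpha:\alpha\in\mathbb{N}^n,\ |\alpha|\le N\}$. *)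

theory Defs
  imports "HOL-Analysis.Analysis"
begin

definition hermite_fun :: "nat \<Rightarrow> real \<Rightarrow> real" where
  "hermite_fun k x =
     (-1) ^ k / sqrt (2 ^ k * fact k * sqrt pi) * exp (x\<^sup>2 / 2)
       * (deriv ^^ k) (\<lambda>t. exp (- (t\<^sup>2))) x"

definition hermite_multi :: "('n::finite \<Rightarrow> nat) \<Rightarrow> real ^ 'n \<Rightarrow> real" where
  "hermite_multi \<alpha> x = (\<Prod>j\<in>UNIV. hermite_fun (\<alpha> j) (x $ j))"

definition multi_len :: "('n::finite \<Rightarrow> nat) \<Rightarrow> nat" where
  "multi_len \<alpha> = (\<Sum>j\<in>UNIV. \<alpha> j)"

definition hermite_space :: "nat \<Rightarrow> (real ^ 'n::finite \<Rightarrow> complex) set" where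
  "hermite_space N =
     {f. \<exists>c :: ('n \<Rightarrow> nat) \<Rightarrow> complex.
           f = (\<lambda>x. \<Sum>\<alpha>\<in>{\<alpha>. multi_len \<alpha> \<le> N}. c \<alpha> * complex_of_real (hermite_multi \<alpha> x))}"

definition L2_norm_on :: "(real ^ 'n::finite) set \<Rightarrow> (real ^ 'n \<Rightarrow> complex) \<Rightarrow> real" where
  "L2_norm_on S f = sqrt (LINT x:S|lborel. (cmod (f x))\<^sup>2)"

end

theory Submission
  imports Defs "HOL-Probability.Distributions"
begin

text \<open>
  Every f in E_N factors as f(x) = P(x) exp(-|x|^2/2), where the restriction of P to any
  line is a polynomial of degree at most N. Lagrange interpolation at N + 1 equally spaced
  nodes on the segment from y towards x bounds |P(x)|^2 by (C (|x - x0| + r) / r)^(2N) times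
  the values of |P|^2 at the nodes. Averaging over y in a ball B(x0, r), with the segment
  shortened so that all nodes stay in B(x0, 2r), a subset of omega, bounds |P(x)|^2 by
  C^N (|x| + C)^(2N) times the integral of |P|^2 over B(x0, 2r). The Gaussian absorbs the
  growth in x at the price (|x| + A)^(2N) exp(-|x|^2/2) <= 4^N N! exp(A^2/2), and
  N! <= (N + 1)^N produces the factor exp(N ln(N + 1) / 2) of the L^2 estimate.
\<close>

text \<open>\<open>gaussian_deriv_poly k\<close> is \<open>(-1)^k H_k\<close> for the physicists' Hermite polynomial \<open>H_k\<close>.\<close>

fun gaussian_deriv_poly :: "nat \<Rightarrow> real poly" where
  "gaussian_deriv_poly 0 = 1"
| "gaussian_deriv_poly (Suc k) = pderiv (gaussian_deriv_poly k) - [:0, 2:] * gaussian_deriv_poly k"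

lemma degree_gaussian_deriv_poly: "degree (gaussian_deriv_poly k) \<le> k"
proof (induction k)
  case (Suc k)
  have "degree ([:0, 2:] * gaussian_deriv_poly k) \<le> Suc k"
    using degree_mult_le[of "[:0, 2::real:]" "gaussian_deriv_poly k"] Suc by simp
  moreover have "degree (pderiv (gaussian_deriv_poly k)) \<le> Suc k"
    using Suc by (simp add: degree_pderiv)
  ultimately show ?case by (simp add: degree_diff_le)
qed simp

lemma deriv_iterate_gaussian:
  "(deriv ^^ k) (\<lambda>t. exp (- (t\<^sup>2))) = (\<lambda>t. poly (gaussian_deriv_poly k) t * exp (- (t\<^sup>2)))"
proof (induction k)
  case (Suc k)
  let ?q = "gaussian_deriv_poly k"
  have "((\<lambda>t. poly ?q t * exp (- (t\<^sup>2))) has_real_derivative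
          poly (gaussian_deriv_poly (Suc k)) t * exp (- (t\<^sup>2))) (at t)" for t
    by (auto intro!: derivative_eq_intros simp: power2_eq_square algebra_simps)
  then have "deriv (\<lambda>t. poly ?q t * exp (- (t\<^sup>2))) =
      (\<lambda>t. poly (gaussian_deriv_poly (Suc k)) t * exp (- (t\<^sup>2)))"
    by (intro ext DERIV_imp_deriv)
  then show ?case
    using Suc by simp
qed simp

definition hermite_poly :: "nat \<Rightarrow> real poly" where
  "hermite_poly k = smult ((-1) ^ k / sqrt (2 ^ k * fact k * sqrt pi)) (gaussian_deriv_poly k)"

lemma degree_hermite_poly: "degree (hermite_poly k) \<le> k"
  using degree_gaussian_deriv_poly[of k] by (simp add: hermite_poly_def)

lemma hermite_fun_eq: "hermite_fun k x = poly (hermite_poly k) x * exp (- (x\<^sup>2) / 2)"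
proof -
  have "exp (x\<^sup>2 / 2) * exp (- (x\<^sup>2)) = exp (- (x\<^sup>2) / 2)"
    by (simp flip: exp_add)
  then show ?thesis
    by (simp add: hermite_fun_def hermite_poly_def deriv_iterate_gaussian algebra_simps)
qed

lemma hermite_multi_eq:
  "hermite_multi \<alpha> x = (\<Prod>j\<in>UNIV. poly (hermite_poly (\<alpha> j)) (x $ j)) * exp (- ((norm x)\<^sup>2) / 2)"
proof -
  have "(norm x)\<^sup>2 = (\<Sum>j\<in>UNIV. (x $ j)\<^sup>2)"
    unfolding power2_norm_eq_inner by (simp add: inner_vec_def power2_eq_square)
  then have "(\<Prod>j\<in>UNIV. exp (- ((x $ j)\<^sup>2) / 2)) = exp (- ((norm x)\<^sup>2) / 2)"
    by (simp add: sum_negf sum_divide_distrib flip: exp_sum)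
  then show ?thesis
    by (simp add: hermite_multi_def hermite_fun_eq prod.distrib)
qed

definition polynomial_on_lines :: "nat \<Rightarrow> ('a::real_vector \<Rightarrow> complex) \<Rightarrow> bool" where
  "polynomial_on_lines N P \<longleftrightarrow>
     (\<forall>y v. \<exists>p. degree p \<le> N \<and> (\<forall>t. P (y + t *\<^sub>R v) = poly p (complex_of_real t)))"

lemma polynomial_on_lines_add:
  assumes "polynomial_on_lines N P" "polynomial_on_lines N Q"
  shows "polynomial_on_lines N (\<lambda>x. P x + Q x)"
  unfolding polynomial_on_lines_def
proof (intro allI)
  fix y v
  obtain p q where "degree p \<le> N" "\<forall>t. P (y + t *\<^sub>R v) = poly p (complex_of_real t)"
    "degree q \<le> N" "\<forall>t. Q (y + t *\<^sub>R v) = poly q (complex_of_real t)"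
    using assms unfolding polynomial_on_lines_def by meson
  then show "\<exists>p. degree p \<le> N \<and> (\<forall>t. P (y + t *\<^sub>R v) + Q (y + t *\<^sub>R v) = poly p (complex_of_real t))"
    by (intro exI[of _ "p + q"]) (simp add: degree_add_le)
qed

lemma polynomial_on_lines_sum:
  assumes "\<And>a. a \<in> A \<Longrightarrow> polynomial_on_lines N (P a)"
  shows "polynomial_on_lines N (\<lambda>x. \<Sum>a\<in>A. P a x)"
  using assms
proof (induction A rule: infinite_finite_induct)
  case (insert a A)
  then show ?case by (simp add: polynomial_on_lines_add)
qed (auto simp: polynomial_on_lines_def intro: exI[of _ 0])

lemma polynomial_on_lines_cmult:
  assumes "polynomial_on_lines N P"
  shows "polynomial_on_lines N (\<lambda>x. c * P x)"
  unfolding polynomial_on_lines_def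
proof (intro allI)
  fix y v
  obtain p where "degree p \<le> N" "\<forall>t. P (y + t *\<^sub>R v) = poly p (complex_of_real t)"
    using assms unfolding polynomial_on_lines_def by meson
  then show "\<exists>p. degree p \<le> N \<and> (\<forall>t. c * P (y + t *\<^sub>R v) = poly p (complex_of_real t))"
    by (intro exI[of _ "smult c p"]) (auto intro: order_trans[OF degree_smult_le])
qed

lemma poly_map_poly_of_real: "poly (map_poly of_real p) (of_real x) = (of_real (poly p x) :: complex)"
  by (induction p) (auto simp: map_poly_pCons)

lemma polynomial_on_lines_coordinate_prod:
  fixes q :: "'n::finite \<Rightarrow> real poly"
  assumes "(\<Sum>j\<in>UNIV. degree (q j)) \<le> N"
  shows "polynomial_on_lines N (\<lambda>x::real ^ 'n. complex_of_real (\<Prod>j\<in>UNIV. poly (q j) (x $ j)))"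
  unfolding polynomial_on_lines_def
proof (intro allI)
  fix y v :: "real ^ 'n"
  define Q where "Q = (\<Prod>j\<in>UNIV. pcompose (q j) [:y $ j, v $ j:])"
  have "degree Q \<le> (\<Sum>j\<in>UNIV. degree (pcompose (q j) [:y $ j, v $ j:]))"
    unfolding Q_def using degree_prod_sum_le[of UNIV "\<lambda>j. pcompose (q j) [:y $ j, v $ j:]"] by (simp add: o_def)
  also have "\<dots> \<le> (\<Sum>j\<in>UNIV. degree (q j))"
    by (intro sum_mono) (simp add: degree_pcompose)
  finally have "degree (map_poly complex_of_real Q) \<le> N"
    using assms by (simp add: degree_map_poly)
  moreover have "complex_of_real (\<Prod>j\<in>UNIV. poly (q j) ((y + t *\<^sub>R v) $ j))
      = poly (map_poly of_real Q) (complex_of_real t)" for t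
    by (simp add: poly_map_poly_of_real Q_def poly_prod poly_pcompose algebra_simps)
  ultimately show "\<exists>p. degree p \<le> N \<and> (\<forall>t. complex_of_real (\<Prod>j\<in>UNIV. poly (q j) ((y + t *\<^sub>R v) $ j))
      = poly p (complex_of_real t))"
    by blast
qed

lemma hermite_space_factor:
  fixes f :: "real ^ 'n::finite \<Rightarrow> complex"
  assumes "f \<in> hermite_space N"
  obtains P where "continuous_on UNIV P" "polynomial_on_lines N P"
    "\<And>x. f x = P x * complex_of_real (exp (- ((norm x)\<^sup>2) / 2))"
proof -
  obtain c where f: "f = (\<lambda>x. \<Sum>\<alpha>\<in>{\<alpha>. multi_len \<alpha> \<le> N}. c \<alpha> * complex_of_real (hermite_multi \<alpha> x))"
    using assms unfolding hermite_space_def by blast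
  define P where "P x = (\<Sum>\<alpha>\<in>{\<alpha>. multi_len \<alpha> \<le> N}.
      c \<alpha> * complex_of_real (\<Prod>j\<in>UNIV. poly (hermite_poly (\<alpha> j)) (x $ j)))" for x :: "real ^ 'n"
  have "continuous_on UNIV P"
    unfolding P_def by (intro continuous_intros)
  moreover have "polynomial_on_lines N P"
    unfolding P_def
  proof (intro polynomial_on_lines_sum polynomial_on_lines_cmult polynomial_on_lines_coordinate_prod)
    fix \<alpha> :: "'n \<Rightarrow> nat" assume "\<alpha> \<in> {\<alpha>. multi_len \<alpha> \<le> N}"
    then show "(\<Sum>j\<in>UNIV. degree (hermite_poly (\<alpha> j))) \<le> N"
      using sum_mono[of UNIV "\<lambda>j. degree (hermite_poly (\<alpha> j))" \<alpha>] degree_hermite_poly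
      by (fastforce simp: multi_len_def)
  qed
  moreover have "f x = P x * complex_of_real (exp (- ((norm x)\<^sup>2) / 2))" for x
    by (simp add: f P_def hermite_multi_eq sum_distrib_right mult.assoc)
  ultimately show ?thesis using that by blast
qed

lemma lagrange_interpolation:
  fixes p :: "'a::field poly" and t :: "nat \<Rightarrow> 'a"
  assumes inj: "inj_on t {..N}" and deg: "degree p \<le> N"
  shows "poly p z = (\<Sum>i\<le>N. poly p (t i) * (\<Prod>j\<in>{..N}-{i}. (z - t j) / (t i - t j)))"
proof -
  define L where "L = (\<Sum>i\<le>N. smult (poly p (t i)) (\<Prod>j\<in>{..N}-{i}. smult (1 / (t i - t j)) [:- t j, 1:]))"
  have poly_L: "poly L z = (\<Sum>i\<le>N. poly p (t i) * (\<Prod>j\<in>{..N}-{i}. (z - t j) / (t i - t j)))" for z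
    by (simp add: L_def poly_sum poly_prod diff_divide_distrib)
  have "poly L (t k) = poly p (t k)" if k: "k \<le> N" for k
  proof -
    have delta: "(\<Prod>j\<in>{..N}-{i}. (t k - t j) / (t i - t j)) = (if i = k then 1 else 0)"
      if "i \<le> N" for i
    proof (cases "i = k")
      case True
      then show ?thesis using inj k that by (auto intro!: prod.neutral simp: inj_on_eq_iff)
    next
      case False
      then show ?thesis using k that by (auto intro!: bexI[of _ k])
    qed
    have "poly L (t k) = (\<Sum>i\<le>N. if i = k then poly p (t i) else 0)"
      unfolding poly_L by (rule sum.cong) (simp_all add: delta)
    then show ?thesis using k by simp
  qed
  moreover have "degree L \<le> N"
    unfolding L_def
  proof (rule degree_sum_le)
    fix i assume i: "i \<in> {..N}"
    have "degree (\<Prod>j\<in>{..N}-{i}. smult (1 / (t i - t j)) [:- t j, 1:])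
        \<le> (\<Sum>j\<in>{..N}-{i}. degree (smult (1 / (t i - t j)) [:- t j, 1:]))"
      using degree_prod_sum_le[of "{..N}-{i}" "\<lambda>j. smult (1 / (t i - t j)) [:- t j, 1:]"]
      by (simp add: o_def)
    also have "\<dots> \<le> (\<Sum>j\<in>{..N}-{i}. 1)"
      by (intro sum_mono) simp
    finally show "degree (smult (poly p (t i)) (\<Prod>j\<in>{..N}-{i}. smult (1 / (t i - t j)) [:- t j, 1:])) \<le> N"
      using i degree_smult_le order_trans by fastforce
  qed simp
  moreover have "card (t ` {..N}) = Suc N"
    using inj by (simp add: card_image)
  ultimately have "p = L"
    using deg by (intro poly_eqI_degree[of "t ` {..N}"]) auto
  then have "poly p z = poly L z" by simp
  also have "\<dots> = (\<Sum>i\<le>N. poly p (t i) * (\<Prod>j\<in>{..N}-{i}. (z - t j) / (t i - t j)))"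
    by (rule poly_L)
  finally show ?thesis .
qed

lemma prod_abs_diff_of_nat:
  assumes "i \<le> N"
  shows "(\<Prod>j\<in>{..N}-{i}. \<bar>real i - real j\<bar>) = fact i * fact (N - i)"
proof -
  have split: "{..N}-{i} = {0..<i} \<union> {Suc i..N}" using assms by auto
  have below: "(\<Prod>j\<in>{0..<i}. \<bar>real i - real j\<bar>) = fact i"
  proof -
    have "(\<Prod>j\<in>{0..<i}. \<bar>real i - real j\<bar>) = (\<Prod>j\<in>{0..<i}. real (i - j))"
      by (intro prod.cong) auto
    then show ?thesis by (simp add: fact_prod_rev[of i])
  qed
  have above: "(\<Prod>j\<in>{Suc i..N}. \<bar>real i - real j\<bar>) = fact (N - i)"
  proof -
    have "(\<Prod>j\<in>{Suc i..N}. \<bar>real i - real j\<bar>) = (\<Prod>k\<in>{0..<N-i}. real (Suc k))"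
      by (rule prod.reindex_bij_witness[of _ "\<lambda>k. Suc k + i" "\<lambda>j. j - Suc i"]) auto
    then show ?thesis by (simp add: fact_prod_Suc[of "N-i"])
  qed
  have "(\<Prod>j\<in>{0..<i} \<union> {Suc i..N}. \<bar>real i - real j\<bar>)
      = (\<Prod>j\<in>{0..<i}. \<bar>real i - real j\<bar>) * (\<Prod>j\<in>{Suc i..N}. \<bar>real i - real j\<bar>)"
    by (rule prod.union_disjoint) auto
  then show ?thesis
    unfolding split below above .
qed

lemma equispaced_node_bounds:
  assumes "i \<le> N" "0 \<le> \<tau>"
  shows "0 \<le> real i * \<tau> / real N" "real i * \<tau> / real N \<le> \<tau>"
proof -
  show "0 \<le> real i * \<tau> / real N"
    using assms by simp
  have "real i * \<tau> \<le> \<tau> * real N"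
    using assms by (simp add: mult.commute mult_left_mono)
  then show "real i * \<tau> / real N \<le> \<tau>"
    using assms by (cases "N = 0") (simp_all add: divide_le_eq)
qed

lemma norm_poly_one_le_equispaced:
  fixes p :: "complex poly"
  assumes deg: "degree p \<le> N" and \<tau>: "0 < \<tau>" "\<tau> \<le> 1"
  shows "cmod (poly p 1) \<le> (\<Sum>i\<le>N. (real N / \<tau>) ^ N / (fact i * fact (N - i))
                                 * cmod (poly p (of_real (real i * \<tau> / real N))))"
proof -
  define s where "s i = real i * \<tau> / real N" for i
  have inj: "inj_on (\<lambda>i. complex_of_real (s i)) {..N}"
    using \<tau> by (cases "N = 0") (auto simp: inj_on_def s_def)
  have node_dist: "(\<Prod>j\<in>{..N}-{i}. \<bar>s i - s j\<bar>) = (\<tau> / real N) ^ N * (fact i * fact (N - i))"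
    if "i \<le> N" for i
  proof -
    have "s i - s j = \<tau> / real N * (real i - real j)" for j
      by (cases "N = 0") (simp_all add: s_def field_simps)
    then have "(\<Prod>j\<in>{..N}-{i}. \<bar>s i - s j\<bar>) = (\<Prod>j\<in>{..N}-{i}. \<tau> / real N * \<bar>real i - real j\<bar>)"
      using \<tau> by (simp add: abs_mult)
    also have "\<dots> = (\<Prod>j\<in>{..N}-{i}. \<tau> / real N) * (\<Prod>j\<in>{..N}-{i}. \<bar>real i - real j\<bar>)"
      by (rule prod.distrib)
    finally show ?thesis
      using that by (simp add: prod_abs_diff_of_nat)
  qed
  have node_le: "\<bar>1 - s j\<bar> \<le> 1" if "j \<le> N" for j
    using equispaced_node_bounds[OF that, of \<tau>] \<tau> by (simp add: s_def)
  have norm_weight: "cmod (\<Prod>j\<in>{..N}-{i}. (1 - of_real (s j)) / (of_real (s i) - of_real (s j)))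
      = (\<Prod>j\<in>{..N}-{i}. \<bar>1 - s j\<bar>) / (\<Prod>j\<in>{..N}-{i}. \<bar>s i - s j\<bar>)" for i
  proof -
    have "(\<Prod>j\<in>{..N}-{i}. (1 - of_real (s j)) / (of_real (s i) - of_real (s j)))
        = complex_of_real (\<Prod>j\<in>{..N}-{i}. (1 - s j) / (s i - s j))"
      by simp
    then show ?thesis
      by (simp only: norm_of_real abs_prod abs_divide prod_dividef)
  qed
  have "cmod (poly p 1) = cmod (\<Sum>i\<le>N. poly p (of_real (s i)) *
      (\<Prod>j\<in>{..N}-{i}. (1 - of_real (s j)) / (of_real (s i) - of_real (s j))))"
    by (subst lagrange_interpolation[OF inj deg]) simp
  also have "\<dots> \<le> (\<Sum>i\<le>N. cmod (poly p (of_real (s i))) *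
      ((\<Prod>j\<in>{..N}-{i}. \<bar>1 - s j\<bar>) / (\<Prod>j\<in>{..N}-{i}. \<bar>s i - s j\<bar>)))"
    by (rule order_trans[OF norm_sum]) (simp add: norm_mult norm_weight)
  also have "\<dots> \<le> (\<Sum>i\<le>N. (real N / \<tau>) ^ N / (fact i * fact (N - i)) * cmod (poly p (of_real (s i))))"
  proof (intro sum_mono)
    fix i assume "i \<in> {..N}"
    have "(\<Prod>j\<in>{..N}-{i}. \<bar>1 - s j\<bar>) \<le> 1"
      using node_le by (intro prod_le_1) auto
    then have "(\<Prod>j\<in>{..N}-{i}. \<bar>1 - s j\<bar>) / (\<Prod>j\<in>{..N}-{i}. \<bar>s i - s j\<bar>)
        \<le> (real N / \<tau>) ^ N / (fact i * fact (N - i))"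
      using \<open>i \<in> {..N}\<close> \<tau> by (simp add: node_dist power_divide field_simps mult_left_le)
    then show "cmod (poly p (of_real (s i))) * ((\<Prod>j\<in>{..N}-{i}. \<bar>1 - s j\<bar>) / (\<Prod>j\<in>{..N}-{i}. \<bar>s i - s j\<bar>))
        \<le> (real N / \<tau>) ^ N / (fact i * fact (N - i)) * cmod (poly p (of_real (s i)))"
      by (subst mult.commute) (rule mult_right_mono, simp_all)
  qed
  finally show ?thesis by (simp add: s_def)
qed

lemma power_div_fact_le_exp:
  fixes x :: real
  assumes "0 \<le> x"
  shows "x ^ n / fact n \<le> exp x"
proof -
  have "summable (\<lambda>k. x ^ k /\<^sub>R fact k)"
    using exp_converges[of x] by (simp add: sums_iff)
  then have "(\<Sum>k\<in>{n}. x ^ k /\<^sub>R fact k) \<le> (\<Sum>k. x ^ k /\<^sub>R fact k)"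
    using assms by (intro sum_le_suminf) auto
  then show ?thesis
    using exp_converges[of x] by (simp add: sums_iff divide_inverse mult.commute)
qed

lemma sum_lagrange_weights_le:
  assumes "0 < \<tau>"
  shows "(\<Sum>i\<le>N. (real N / \<tau>) ^ N / (fact i * fact (N - i))) \<le> (2 * exp 1 / \<tau>) ^ N"
proof -
  have "(\<Sum>i\<le>N. (real N / \<tau>) ^ N / (fact i * fact (N - i)))
      = (real N / \<tau>) ^ N / fact N * (\<Sum>i\<le>N. real (N choose i))"
    by (simp add: sum_distrib_left binomial_fact)
  also have "\<dots> = (2 / \<tau>) ^ N * (real N ^ N / fact N)"
    by (simp flip: of_nat_sum add: choose_row_sum power_divide power_mult_distrib)
  also have "\<dots> \<le> (2 / \<tau>) ^ N * exp (real N)"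
    using assms by (intro mult_left_mono power_div_fact_le_exp) auto
  also have "\<dots> = (2 * exp 1 / \<tau>) ^ N"
    by (simp add: power_divide power_mult_distrib flip: exp_of_nat_mult)
  finally show ?thesis .
qed

lemma norm_poly_one_sq_le_equispaced:
  fixes p :: "complex poly"
  assumes deg: "degree p \<le> N" and \<tau>: "0 < \<tau>" "\<tau> \<le> 1"
  shows "(cmod (poly p 1))\<^sup>2
    \<le> (2 * exp 1 / \<tau>) ^ (2 * N) * (\<Sum>i\<le>N. (cmod (poly p (of_real (real i * \<tau> / real N))))\<^sup>2)"
proof -
  define a where "a i = (real N / \<tau>) ^ N / (fact i * fact (N - i))" for i
  define b where "b i = cmod (poly p (of_real (real i * \<tau> / real N)))" for i
  have a_nonneg: "0 \<le> a i" for i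
    using \<tau> by (simp add: a_def)
  have "(\<Sum>i\<le>N. (a i)\<^sup>2) \<le> (\<Sum>i\<le>N. a i * (\<Sum>k\<le>N. a k))"
    unfolding power2_eq_square
    by (intro sum_mono mult_left_mono member_le_sum) (auto simp: a_nonneg)
  also have "\<dots> = (\<Sum>i\<le>N. a i)\<^sup>2"
    by (simp add: power2_eq_square sum_distrib_right)
  also have "\<dots> \<le> ((2 * exp 1 / \<tau>) ^ N)\<^sup>2"
    using sum_lagrange_weights_le[OF \<tau>(1), of N]
    by (intro power_mono sum_nonneg) (auto simp: a_nonneg simp flip: a_def)
  finally have sum_sq_a: "(\<Sum>i\<le>N. (a i)\<^sup>2) \<le> (2 * exp 1 / \<tau>) ^ (2 * N)"
    by (simp add: power_mult mult.commute)
  have "(cmod (poly p 1))\<^sup>2 \<le> (\<Sum>i\<le>N. a i * b i)\<^sup>2"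
    using norm_poly_one_le_equispaced[OF assms] by (intro power_mono) (auto simp: a_def b_def)
  also have "\<dots> \<le> (\<Sum>i\<le>N. (a i)\<^sup>2) * (\<Sum>i\<le>N. (b i)\<^sup>2)"
    by (rule Cauchy_Schwarz_ineq_sum)
  also have "\<dots> \<le> (2 * exp 1 / \<tau>) ^ (2 * N) * (\<Sum>i\<le>N. (b i)\<^sup>2)"
    using sum_sq_a by (intro mult_right_mono) (auto intro: sum_nonneg)
  finally show ?thesis by (simp add: b_def)
qed

lemma polynomial_on_lines_sq_norm_le:
  fixes P :: "'a::real_vector \<Rightarrow> complex"
  assumes lines: "polynomial_on_lines N P" and \<tau>: "0 < \<tau>" "\<tau> \<le> 1"
  shows "(cmod (P x))\<^sup>2 \<le> (2 * exp 1 / \<tau>) ^ (2 * N) *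
    (\<Sum>i\<le>N. (cmod (P ((real i * \<tau> / real N) *\<^sub>R x + (1 - real i * \<tau> / real N) *\<^sub>R y)))\<^sup>2)"
proof -
  obtain p where "degree p \<le> N" and p: "\<And>t. P (y + t *\<^sub>R (x - y)) = poly p (complex_of_real t)"
    using lines unfolding polynomial_on_lines_def by blast
  moreover have "P x = poly p 1"
    using p[of 1] by simp
  moreover have "P (s *\<^sub>R x + (1 - s) *\<^sub>R y) = poly p (of_real s)" for s
    using p[of s] by (simp add: algebra_simps)
  ultimately show ?thesis
    using norm_poly_one_sq_le_equispaced[of p N \<tau>] \<tau> by simp
qed

lemma nn_integral_homothety_ball_le:
  fixes g :: "real ^ 'n::finite \<Rightarrow> ennreal" and x x0 :: "real ^ 'n"
  assumes g[measurable]: "g \<in> borel_measurable borel"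
    and r: "0 < r" and s: "0 \<le> s" "s \<le> 1/2" "s * dist x x0 \<le> r"
  shows "(\<integral>\<^sup>+y\<in>ball x0 r. g (s *\<^sub>R x + (1 - s) *\<^sub>R y) \<partial>lborel)
    \<le> 2 ^ CARD('n) * (\<integral>\<^sup>+z\<in>ball x0 (2 * r). g z \<partial>lborel)"
proof -
  define G where "G z = g z * indicator (ball x0 (2 * r)) z" for z
  have [measurable]: "ball x0 (2 * r) \<in> sets borel" by simp
  have G_meas[measurable]: "G \<in> borel_measurable borel"
    unfolding G_def by measurable
  have in_ball: "s *\<^sub>R x + (1 - s) *\<^sub>R y \<in> ball x0 (2 * r)" if "y \<in> ball x0 r" for y
  proof -
    have "dist x0 (s *\<^sub>R x + (1 - s) *\<^sub>R y) = norm (s *\<^sub>R (x - x0) + (1 - s) *\<^sub>R (y - x0))"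
      by (simp add: dist_norm norm_minus_commute algebra_simps)
    also have "\<dots> \<le> s * dist x x0 + (1 - s) * dist y x0"
      using s norm_triangle_ineq[of "s *\<^sub>R (x - x0)" "(1 - s) *\<^sub>R (y - x0)"]
      by (simp add: dist_norm)
    also have "\<dots> < 2 * r"
      using that s r mult_left_le_one_le[of "dist y x0" "1 - s"]
      by (simp add: dist_commute)
    finally show ?thesis by simp
  qed
  have "(\<integral>\<^sup>+y\<in>ball x0 r. g (s *\<^sub>R x + (1 - s) *\<^sub>R y) \<partial>lborel)
      \<le> (\<integral>\<^sup>+y. G (s *\<^sub>R x + (1 - s) *\<^sub>R y) \<partial>lborel)"
  proof (intro nn_integral_mono)
    fix y
    show "g (s *\<^sub>R x + (1 - s) *\<^sub>R y) * indicator (ball x0 r) y \<le> G (s *\<^sub>R x + (1 - s) *\<^sub>R y)"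
      using in_ball[of y] by (cases "y \<in> ball x0 r") (simp_all add: G_def)
  qed
  also have "\<dots> \<le> ennreal ((2 * (1 - s)) ^ CARD('n)) * (\<integral>\<^sup>+y. G (s *\<^sub>R x + (1 - s) *\<^sub>R y) \<partial>lborel)"
  proof -
    have "ennreal 1 \<le> ennreal ((2 * (1 - s)) ^ CARD('n))"
      using s by (intro ennreal_leI one_le_power) auto
    from mult_right_mono[OF this] show ?thesis by simp
  qed
  also have "\<dots> = 2 ^ CARD('n) * (\<integral>\<^sup>+z. G z \<partial>lborel)"
  proof -
    have "(\<integral>\<^sup>+z. G z \<partial>lborel)
        = ennreal ((1 - s) ^ CARD('n)) * (\<integral>\<^sup>+y. G (s *\<^sub>R x + (1 - s) *\<^sub>R y) \<partial>lborel)"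
      using s by (subst lborel_affine[of "1 - s" "s *\<^sub>R x"])
        (simp_all add: nn_integral_density nn_integral_distr nn_integral_cmult)
    moreover have "ennreal ((2 * (1 - s)) ^ CARD('n)) = 2 ^ CARD('n) * ennreal ((1 - s) ^ CARD('n))"
      by (subst power_mult_distrib, subst ennreal_mult')
        (simp_all add: ennreal_power[symmetric])
    ultimately show ?thesis
      by (simp add: mult.assoc)
  qed
  finally show ?thesis by (simp add: G_def)
qed

lemma ennreal_le_ball_average:
  fixes f :: "'a::euclidean_space \<Rightarrow> ennreal"
  assumes f[measurable]: "f \<in> borel_measurable borel"
    and r: "0 < r" and c: "0 \<le> c" and a: "\<And>y. ennreal a \<le> ennreal c * f y"
  shows "ennreal a \<le> ennreal (c / measure lborel (ball x0 r)) * (\<integral>\<^sup>+y\<in>ball x0 r. f y \<partial>lborel)"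
proof -
  define V where "V = measure lborel (ball x0 r)"
  have V: "0 < V" "emeasure lborel (ball x0 r) = ennreal V"
    using r emeasure_bounded_finite[of "ball x0 r"]
    by (simp_all add: V_def emeasure_eq_ennreal_measure)
  have "ennreal a = (\<integral>\<^sup>+y\<in>ball x0 r. ennreal (a / V) \<partial>lborel)"
  proof (cases "0 \<le> a")
    case True
    then show ?thesis
      using V by (simp add: nn_integral_cmult_indicator flip: ennreal_mult'')
  next
    case False
    then have "a / V \<le> 0"
      using V by (simp add: divide_nonpos_pos)
    then show ?thesis
      using False by (simp add: ennreal_neg)
  qed
  also have "\<dots> \<le> (\<integral>\<^sup>+y\<in>ball x0 r. ennreal (c / V) * f y \<partial>lborel)"
  proof (rule nn_integral_mono, rule mult_right_mono)
    fix y
    have "ennreal (a / V) = ennreal a * ennreal (1 / V)"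
      using V by (simp flip: ennreal_mult'')
    also have "\<dots> \<le> ennreal c * f y * ennreal (1 / V)"
      using a by (rule mult_right_mono) simp
    also have "\<dots> = ennreal (c * (1 / V)) * f y"
      by (simp only: ennreal_mult'[OF c] mult_ac)
    finally show "ennreal (a / V) \<le> ennreal (c / V) * f y"
      by simp
  qed simp
  also have "\<dots> = ennreal (c / V) * (\<integral>\<^sup>+y\<in>ball x0 r. f y \<partial>lborel)"
  proof -
    have [measurable]: "ball x0 r \<in> sets borel" by simp
    have "(\<lambda>y. f y * indicator (ball x0 r) y) \<in> borel_measurable lborel" by measurable
    then show ?thesis by (simp add: nn_integral_cmult mult.assoc)
  qed
  finally show ?thesis
    by (simp add: V_def)
qed

lemma nn_integral_sum_homothety_ball_le:
  fixes g :: "real ^ 'n::finite \<Rightarrow> ennreal" and x x0 :: "real ^ 'n" and s :: "nat \<Rightarrow> real"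
  assumes g[measurable]: "g \<in> borel_measurable borel" and r: "0 < r"
    and s: "\<And>i. i \<le> N \<Longrightarrow> 0 \<le> s i \<and> s i \<le> 1/2 \<and> s i * dist x x0 \<le> r"
  shows "(\<integral>\<^sup>+y\<in>ball x0 r. (\<Sum>i\<le>N. g (s i *\<^sub>R x + (1 - s i) *\<^sub>R y)) \<partial>lborel)
    \<le> ennreal (real (Suc N) * 2 ^ CARD('n)) * (\<integral>\<^sup>+z\<in>ball x0 (2 * r). g z \<partial>lborel)"
proof -
  have [measurable]: "ball x0 r \<in> sets borel" by simp
  have [measurable]: "(\<lambda>y. s i *\<^sub>R x + (1 - s i) *\<^sub>R y) \<in> borel_measurable borel" for i
    by (intro borel_measurable_continuous_onI continuous_intros)
  have "(\<integral>\<^sup>+y\<in>ball x0 r. (\<Sum>i\<le>N. g (s i *\<^sub>R x + (1 - s i) *\<^sub>R y)) \<partial>lborel)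
      = (\<integral>\<^sup>+y. (\<Sum>i\<le>N. g (s i *\<^sub>R x + (1 - s i) *\<^sub>R y) * indicator (ball x0 r) y) \<partial>lborel)"
    by (simp only: sum_distrib_right)
  also have "\<dots> = (\<Sum>i\<le>N. \<integral>\<^sup>+y\<in>ball x0 r. g (s i *\<^sub>R x + (1 - s i) *\<^sub>R y) \<partial>lborel)"
    by (rule nn_integral_sum) measurable
  also have "\<dots> \<le> (\<Sum>i\<le>N. 2 ^ CARD('n) * (\<integral>\<^sup>+z\<in>ball x0 (2 * r). g z \<partial>lborel))"
    using s by (intro sum_mono nn_integral_homothety_ball_le g r) auto
  also have "\<dots> = ennreal (real (Suc N) * 2 ^ CARD('n)) * (\<integral>\<^sup>+z\<in>ball x0 (2 * r). g z \<partial>lborel)"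
    by (simp add: ennreal_mult ennreal_of_nat_eq_real_of_nat mult.assoc flip: ennreal_power)
  finally show ?thesis .
qed

lemma sq_norm_le_ball_integral:
  fixes P :: "real ^ 'n::finite \<Rightarrow> complex" and x x0 :: "real ^ 'n"
  assumes cont: "continuous_on UNIV P" and lines: "polynomial_on_lines N P" and r: "0 < r"
  shows "ennreal ((cmod (P x))\<^sup>2)
    \<le> ennreal ((4 * exp 1 * (dist x x0 + r) / r) ^ (2 * N) * real (Suc N) * 2 ^ CARD('n)
                / measure lborel (ball x0 r))
       * (\<integral>\<^sup>+z\<in>ball x0 (2 * r). ennreal ((cmod (P z))\<^sup>2) \<partial>lborel)"
proof -
  \<comment> \<open>With this \<open>\<tau>\<close> the interpolation nodes for every \<open>y\<close> in the ball of radius \<open>r\<close>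
    lie in the ball of radius \<open>2 * r\<close>, and \<open>2 * exp 1 / \<tau>\<close> grows linearly in \<open>dist x x0\<close>.\<close>
  define \<tau> where "\<tau> = r / (2 * (dist x x0 + r))"
  have d: "0 < dist x x0 + r"
    using r zero_le_dist[of x x0] by linarith
  have \<tau>: "0 < \<tau>" "\<tau> \<le> 1/2" "\<tau> * dist x x0 \<le> r"
    using r d by (auto simp: \<tau>_def field_simps)
  define \<Lambda> where "\<Lambda> = (4 * exp 1 * (dist x x0 + r) / r) ^ (2 * N)"
  have \<Lambda>: "\<Lambda> = (2 * exp 1 / \<tau>) ^ (2 * N)"
    using r d by (simp add: \<Lambda>_def \<tau>_def field_simps)
  define s where "s i = real i * \<tau> / real N" for i
  define g where "g z = ennreal ((cmod (P z))\<^sup>2)" for z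
  have g_meas[measurable]: "g \<in> borel_measurable borel"
    unfolding g_def
    by (intro measurable_compose[OF _ measurable_ennreal] borel_measurable_continuous_onI
        continuous_intros cont)
  have "ennreal ((cmod (P x))\<^sup>2) \<le> ennreal (\<Lambda> / measure lborel (ball x0 r))
      * (\<integral>\<^sup>+y\<in>ball x0 r. (\<Sum>i\<le>N. g (s i *\<^sub>R x + (1 - s i) *\<^sub>R y)) \<partial>lborel)"
  proof (rule ennreal_le_ball_average[OF _ r])
    fix y
    have "(cmod (P x))\<^sup>2 \<le> \<Lambda> * (\<Sum>i\<le>N. (cmod (P (s i *\<^sub>R x + (1 - s i) *\<^sub>R y)))\<^sup>2)"
      unfolding \<Lambda> s_def using \<tau> by (intro polynomial_on_lines_sq_norm_le lines) auto
    then have "ennreal ((cmod (P x))\<^sup>2) \<le> ennreal (\<Lambda> * (\<Sum>i\<le>N. (cmod (P (s i *\<^sub>R x + (1 - s i) *\<^sub>R y)))\<^sup>2))"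
      by (rule ennreal_leI)
    then show "ennreal ((cmod (P x))\<^sup>2) \<le> ennreal \<Lambda> * (\<Sum>i\<le>N. g (s i *\<^sub>R x + (1 - s i) *\<^sub>R y))"
      by (simp add: g_def ennreal_mult'' sum_nonneg)
  qed (simp_all add: \<Lambda>_def)
  also have "\<dots> \<le> ennreal (\<Lambda> / measure lborel (ball x0 r))
      * (ennreal (real (Suc N) * 2 ^ CARD('n)) * (\<integral>\<^sup>+z\<in>ball x0 (2 * r). g z \<partial>lborel))"
  proof (intro mult_left_mono nn_integral_sum_homothety_ball_le g_meas r conjI)
    fix i assume "i \<le> N"
    then show "0 \<le> s i" and "s i \<le> 1/2" and "s i * dist x x0 \<le> r"
      using equispaced_node_bounds[of i N \<tau>] mult_right_mono[of "s i" \<tau> "dist x x0"] \<tau>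
      unfolding s_def[symmetric] by auto
  qed simp
  also have "\<dots> = ennreal (\<Lambda> / measure lborel (ball x0 r) * (real (Suc N) * 2 ^ CARD('n)))
      * (\<integral>\<^sup>+z\<in>ball x0 (2 * r). g z \<partial>lborel)"
    by (subst ennreal_mult''[where b = "real (Suc N) * 2 ^ CARD('n)"]) (simp_all add: mult.assoc)
  finally show ?thesis
    by (simp add: \<Lambda>_def g_def mult.assoc)
qed

lemma nn_integral_gaussian_finite:
  "(\<integral>\<^sup>+x. ennreal (exp (- ((norm (x :: real ^ 'n::finite))\<^sup>2) / 2)) \<partial>lborel) < \<infinity>"
proof -
  have "exp (- ((norm x)\<^sup>2) / 2) = (\<Prod>b\<in>Basis. exp (- ((x \<bullet> b)\<^sup>2) / 2))" for x :: "real ^ 'n"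
  proof -
    have "(norm x)\<^sup>2 = (\<Sum>b\<in>Basis. (x \<bullet> b)\<^sup>2)"
      unfolding power2_norm_eq_inner by (subst euclidean_inner) (simp add: power2_eq_square)
    then show ?thesis by (simp add: exp_sum[symmetric] sum_negf sum_divide_distrib)
  qed
  then have "(\<integral>\<^sup>+x. ennreal (exp (- ((norm (x :: real ^ 'n))\<^sup>2) / 2)) \<partial>lborel)
      = (\<integral>\<^sup>+x. (\<Prod>b\<in>(Basis :: (real ^ 'n) set). ennreal (exp (- ((x \<bullet> b)\<^sup>2) / 2))) \<partial>lborel)"
    by (intro nn_integral_cong) (simp add: prod_ennreal)
  also have "\<dots> = (\<Prod>b\<in>(Basis :: (real ^ 'n) set). (\<integral>\<^sup>+t. ennreal (exp (- (t\<^sup>2) / 2)) \<partial>lborel))"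
    by (rule nn_integral_lborel_prod) auto
  also have "\<dots> < \<infinity>"
  proof -
    have "(\<integral>\<^sup>+t. ennreal (std_normal_density t) \<partial>lborel) < \<infinity>"
    proof -
      have "(\<integral>\<^sup>+t. ennreal (norm (std_normal_density t)) \<partial>lborel) < \<infinity>"
        using integrable_normal_density[of 1 0] unfolding integrable_iff_bounded by simp
      then show ?thesis by (simp add: normal_density_nonneg)
    qed
    moreover have "(\<integral>\<^sup>+t. ennreal (exp (- (t\<^sup>2) / 2)) \<partial>lborel)
        = ennreal (sqrt (2 * pi)) * (\<integral>\<^sup>+t. ennreal (std_normal_density t) \<partial>lborel)"
      by (subst nn_integral_cmult[symmetric])
        (auto simp: std_normal_density_def ennreal_mult''[symmetric])
    ultimately show ?thesis
      by (simp add: ennreal_mult_less_top power_less_top_ennreal)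
  qed
  finally show ?thesis .
qed

lemma power_mult_gaussian_le:
  fixes u A :: real
  assumes "0 \<le> u" "0 \<le> A"
  shows "(u + A) ^ (2 * N) * exp (- (u\<^sup>2)) \<le> 4 ^ N * fact N * exp (A\<^sup>2 / 2) * exp (- (u\<^sup>2) / 2)"
proof -
  have "(u + A)\<^sup>2 / 4 \<le> u\<^sup>2 / 2 + A\<^sup>2 / 2"
    using sum_squares_ge_zero[of "u - A" 0] by (simp add: power2_eq_square algebra_simps)
  have "((u + A)\<^sup>2 / 4) ^ N / fact N \<le> exp ((u + A)\<^sup>2 / 4)"
    by (rule power_div_fact_le_exp) simp
  also have "\<dots> \<le> exp (u\<^sup>2 / 2 + A\<^sup>2 / 2)"
    using \<open>(u + A)\<^sup>2 / 4 \<le> u\<^sup>2 / 2 + A\<^sup>2 / 2\<close> by simp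
  finally have "((u + A)\<^sup>2 / 4) ^ N \<le> fact N * exp (u\<^sup>2 / 2 + A\<^sup>2 / 2)"
    by (simp add: divide_le_eq mult.commute)
  moreover have "(u + A) ^ (2 * N) = 4 ^ N * ((u + A)\<^sup>2 / 4) ^ N"
    by (simp add: power_mult power_divide)
  ultimately have "(u + A) ^ (2 * N) \<le> 4 ^ N * fact N * (exp (A\<^sup>2 / 2) * exp (u\<^sup>2 / 2))"
    by (simp add: exp_add mult_ac)
  then have "(u + A) ^ (2 * N) * exp (- (u\<^sup>2))
      \<le> 4 ^ N * fact N * (exp (A\<^sup>2 / 2) * exp (u\<^sup>2 / 2)) * exp (- (u\<^sup>2))"
    by (rule mult_right_mono) simp
  also have "\<dots> = 4 ^ N * fact N * exp (A\<^sup>2 / 2) * exp (- (u\<^sup>2) / 2)"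
    by (simp add: mult.assoc flip: exp_add)
  finally show ?thesis .
qed

lemma ball_weight_gaussian_le:
  fixes x x0 :: "'a::real_normed_vector"
  assumes r: "0 < r"
  shows "(4 * exp 1 * (dist x x0 + r) / r) ^ (2 * N) * exp (- ((norm x)\<^sup>2))
    \<le> (8 * exp 1 / r) ^ (2 * N) * fact N * exp ((norm x0 + r)\<^sup>2 / 2) * exp (- ((norm x)\<^sup>2) / 2)"
proof -
  have "dist x x0 + r \<le> norm x + (norm x0 + r)"
    using norm_triangle_ineq4[of x x0] by (simp add: dist_norm)
  then have "(dist x x0 + r) ^ (2 * N) * exp (- ((norm x)\<^sup>2))
      \<le> (norm x + (norm x0 + r)) ^ (2 * N) * exp (- ((norm x)\<^sup>2))"
    using r by (intro mult_right_mono power_mono) auto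
  also have "\<dots> \<le> 4 ^ N * fact N * exp ((norm x0 + r)\<^sup>2 / 2) * exp (- ((norm x)\<^sup>2) / 2)"
    using r by (intro power_mult_gaussian_le) auto
  finally have "(4 * exp 1 / r) ^ (2 * N) * ((dist x x0 + r) ^ (2 * N) * exp (- ((norm x)\<^sup>2)))
      \<le> (4 * exp 1 / r) ^ (2 * N) * (4 ^ N * fact N * exp ((norm x0 + r)\<^sup>2 / 2) * exp (- ((norm x)\<^sup>2) / 2))"
    by (rule mult_left_mono) simp
  moreover have "(8 * exp 1 / r) ^ (2 * N) = 4 ^ N * (4 * exp 1 / r) ^ (2 * N)"
  proof -
    have "(8 * exp 1 / r) ^ (2 * N) = (2 * (4 * exp 1 / r)) ^ (2 * N)"
      by simp
    also have "\<dots> = 4 ^ N * (4 * exp 1 / r) ^ (2 * N)"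
      by (simp only: power_mult_distrib power_mult) simp
    finally show ?thesis .
  qed
  moreover have "(4 * exp 1 * (dist x x0 + r) / r) ^ (2 * N)
      = (4 * exp 1 / r) ^ (2 * N) * (dist x x0 + r) ^ (2 * N)"
    unfolding power_mult_distrib[symmetric] by simp
  ultimately show ?thesis
    by (simp only:) (simp add: mult_ac)
qed

lemma sq_norm_gaussian_le_ball_integral:
  fixes P :: "real ^ 'n::finite \<Rightarrow> complex" and x x0 :: "real ^ 'n"
  assumes cont: "continuous_on UNIV P" and lines: "polynomial_on_lines N P" and r: "0 < r"
  shows "ennreal ((cmod (P x))\<^sup>2 * exp (- ((norm x)\<^sup>2)))
    \<le> ennreal (2 ^ CARD('n) * exp ((norm x0 + r)\<^sup>2 / 2) / measure lborel (ball x0 r)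
               * (8 * exp 1 / r) ^ (2 * N) * fact (Suc N) * exp (- ((norm x)\<^sup>2) / 2))
       * (\<integral>\<^sup>+z\<in>ball x0 (2 * r). ennreal ((cmod (P z))\<^sup>2) \<partial>lborel)"
proof -
  define c where "c = real (Suc N) * 2 ^ CARD('n) / measure lborel (ball x0 r)"
  define W where "W = (4 * exp 1 * (dist x x0 + r) / r) ^ (2 * N)"
  define I where "I = (\<integral>\<^sup>+z\<in>ball x0 (2 * r). ennreal ((cmod (P z))\<^sup>2) \<partial>lborel)"
  have c: "0 \<le> c" by (simp add: c_def)
  have "ennreal ((cmod (P x))\<^sup>2 * exp (- ((norm x)\<^sup>2)))
      = ennreal ((cmod (P x))\<^sup>2) * ennreal (exp (- ((norm x)\<^sup>2)))"
    by (rule ennreal_mult'') simp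
  also have "\<dots> \<le> ennreal (W * c) * I * ennreal (exp (- ((norm x)\<^sup>2)))"
    using sq_norm_le_ball_integral[OF cont lines r, of x x0]
    by (intro mult_right_mono) (simp_all add: W_def c_def I_def mult.assoc)
  also have "\<dots> = ennreal (c * (W * exp (- ((norm x)\<^sup>2)))) * I"
    using c by (simp add: ennreal_mult'' mult_ac)
  also have "\<dots> \<le> ennreal (c * ((8 * exp 1 / r) ^ (2 * N) * fact N * exp ((norm x0 + r)\<^sup>2 / 2)
      * exp (- ((norm x)\<^sup>2) / 2))) * I"
    unfolding W_def using c ball_weight_gaussian_le[OF r, of x x0 N]
    by (intro mult_right_mono ennreal_leI mult_left_mono) simp_all
  finally show ?thesis
    by (simp add: c_def I_def fact_Suc mult_ac)
qed

lemma nn_integral_ball_gaussian_ge: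
  fixes P :: "real ^ 'n::finite \<Rightarrow> complex" and x0 :: "real ^ 'n"
  assumes "continuous_on UNIV P"
  shows "(\<integral>\<^sup>+z\<in>ball x0 \<rho>. ennreal ((cmod (P z))\<^sup>2) \<partial>lborel)
    \<le> ennreal (exp ((norm x0 + \<rho>)\<^sup>2))
       * (\<integral>\<^sup>+z\<in>ball x0 \<rho>. ennreal ((cmod (P z))\<^sup>2 * exp (- ((norm z)\<^sup>2))) \<partial>lborel)"
proof -
  have [measurable]: "ball x0 \<rho> \<in> sets borel" by simp
  have "(\<lambda>z. ennreal ((cmod (P z))\<^sup>2 * exp (- ((norm z)\<^sup>2)))) \<in> borel_measurable borel"
    by (intro measurable_compose[OF _ measurable_ennreal] borel_measurable_continuous_onI
        continuous_intros assms)
  then have "ennreal (exp ((norm x0 + \<rho>)\<^sup>2))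
       * (\<integral>\<^sup>+z\<in>ball x0 \<rho>. ennreal ((cmod (P z))\<^sup>2 * exp (- ((norm z)\<^sup>2))) \<partial>lborel)
     = (\<integral>\<^sup>+z\<in>ball x0 \<rho>. ennreal (exp ((norm x0 + \<rho>)\<^sup>2)) * ennreal ((cmod (P z))\<^sup>2 * exp (- ((norm z)\<^sup>2))) \<partial>lborel)"
    by (simp add: nn_integral_cmult mult.assoc)
  moreover have "(\<integral>\<^sup>+z\<in>ball x0 \<rho>. ennreal ((cmod (P z))\<^sup>2) \<partial>lborel)
      \<le> (\<integral>\<^sup>+z\<in>ball x0 \<rho>. ennreal (exp ((norm x0 + \<rho>)\<^sup>2)) * ennreal ((cmod (P z))\<^sup>2 * exp (- ((norm z)\<^sup>2))) \<partial>lborel)"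
  proof (rule nn_integral_mono)
    fix z
    show "ennreal ((cmod (P z))\<^sup>2) * indicator (ball x0 \<rho>) z
      \<le> ennreal (exp ((norm x0 + \<rho>)\<^sup>2)) * ennreal ((cmod (P z))\<^sup>2 * exp (- ((norm z)\<^sup>2))) * indicator (ball x0 \<rho>) z"
    proof (cases "z \<in> ball x0 \<rho>")
      case True
      then have "norm z \<le> norm x0 + \<rho>"
        using norm_triangle_ineq2[of z x0] by (simp add: dist_norm norm_minus_commute)
      then have "exp ((norm z)\<^sup>2) \<le> exp ((norm x0 + \<rho>)\<^sup>2)"
        by (simp add: power_mono)
      then have "exp ((norm z)\<^sup>2) * ((cmod (P z))\<^sup>2 * exp (- ((norm z)\<^sup>2)))
          \<le> exp ((norm x0 + \<rho>)\<^sup>2) * ((cmod (P z))\<^sup>2 * exp (- ((norm z)\<^sup>2)))"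
        by (rule mult_right_mono) simp
      moreover have "exp ((norm z)\<^sup>2) * ((cmod (P z))\<^sup>2 * exp (- ((norm z)\<^sup>2))) = (cmod (P z))\<^sup>2"
        by (metis exp_minus_inverse mult.left_commute mult.right_neutral)
      ultimately have "(cmod (P z))\<^sup>2 \<le> exp ((norm x0 + \<rho>)\<^sup>2) * ((cmod (P z))\<^sup>2 * exp (- ((norm z)\<^sup>2)))"
        by simp
      then show ?thesis
        using True by (simp add: ennreal_leI flip: ennreal_mult'')
    qed simp
  qed
  ultimately show ?thesis by simp
qed

lemma nn_integral_line_polynomial_gaussian_le:
  fixes x0 :: "real ^ 'n::finite"
  assumes r: "0 < r"
  obtains K where "0 \<le> K"
    "\<And>N P. continuous_on UNIV P \<Longrightarrow> polynomial_on_lines N P \<Longrightarrow>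
      (\<integral>\<^sup>+x. ennreal ((cmod (P x))\<^sup>2 * exp (- ((norm x)\<^sup>2))) \<partial>lborel)
        \<le> ennreal (K * (8 * exp 1 / r) ^ (2 * N) * fact (Suc N))
          * (\<integral>\<^sup>+x\<in>ball x0 (2 * r). ennreal ((cmod (P x))\<^sup>2 * exp (- ((norm x)\<^sup>2))) \<partial>lborel)"
proof
  define c where "c = 2 ^ CARD('n) * exp ((norm x0 + r)\<^sup>2 / 2) / measure lborel (ball x0 r)"
  define G where "G = enn2real (\<integral>\<^sup>+x. ennreal (exp (- ((norm (x :: real ^ 'n))\<^sup>2) / 2)) \<partial>lborel)"
  have G: "(\<integral>\<^sup>+x. ennreal (exp (- ((norm (x :: real ^ 'n))\<^sup>2) / 2)) \<partial>lborel) = ennreal G"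
    using nn_integral_gaussian_finite[where 'n='n] by (simp add: G_def less_top)
  have c: "0 \<le> c" by (simp add: c_def)
  show "0 \<le> c * G * exp ((norm x0 + 2 * r)\<^sup>2)"
    using c by (simp add: G_def)
  fix N and P :: "real ^ 'n \<Rightarrow> complex"
  assume cont: "continuous_on UNIV P" and lines: "polynomial_on_lines N P"
  define B where "B = (8 * exp 1 / r) ^ (2 * N) * fact (Suc N)"
  have B: "0 \<le> B" using r by (simp add: B_def)
  define I where "I = (\<integral>\<^sup>+z\<in>ball x0 (2 * r). ennreal ((cmod (P z))\<^sup>2) \<partial>lborel)"
  have gauss_meas: "(\<lambda>x::real ^ 'n. ennreal (exp (- ((norm x)\<^sup>2) / 2))) \<in> borel_measurable borel"
    by (intro measurable_compose[OF _ measurable_ennreal] borel_measurable_continuous_onI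
        continuous_intros) auto
  have "(\<integral>\<^sup>+x. ennreal ((cmod (P x))\<^sup>2 * exp (- ((norm x)\<^sup>2))) \<partial>lborel)
      \<le> (\<integral>\<^sup>+x. ennreal (c * B) * ennreal (exp (- ((norm (x :: real ^ 'n))\<^sup>2) / 2)) * I \<partial>lborel)"
  proof (rule nn_integral_mono)
    fix x :: "real ^ 'n"
    have "ennreal (c * B * exp (- ((norm x)\<^sup>2) / 2)) = ennreal (c * B) * ennreal (exp (- ((norm x)\<^sup>2) / 2))"
      by (rule ennreal_mult'') simp
    then show "ennreal ((cmod (P x))\<^sup>2 * exp (- ((norm x)\<^sup>2))) \<le> ennreal (c * B) * ennreal (exp (- ((norm x)\<^sup>2) / 2)) * I"
      using sq_norm_gaussian_le_ball_integral[OF cont lines r, of x x0]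
      by (simp add: c_def B_def I_def mult.assoc)
  qed
  also have "\<dots> = ennreal (c * B) * ennreal G * I"
    using gauss_meas by (simp add: nn_integral_multc nn_integral_cmult G[simplified])
  also have "\<dots> \<le> ennreal (c * B) * ennreal G * (ennreal (exp ((norm x0 + 2 * r)\<^sup>2))
      * (\<integral>\<^sup>+x\<in>ball x0 (2 * r). ennreal ((cmod (P x))\<^sup>2 * exp (- ((norm x)\<^sup>2))) \<partial>lborel))"
    unfolding I_def by (intro mult_left_mono nn_integral_ball_gaussian_ge cont) simp
  also have "\<dots> = ennreal (c * G * exp ((norm x0 + 2 * r)\<^sup>2) * B)
      * (\<integral>\<^sup>+x\<in>ball x0 (2 * r). ennreal ((cmod (P x))\<^sup>2 * exp (- ((norm x)\<^sup>2))) \<partial>lborel)"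
    using B c by (simp add: ennreal_mult'' G_def mult_ac)
  finally show "(\<integral>\<^sup>+x. ennreal ((cmod (P x))\<^sup>2 * exp (- ((norm x)\<^sup>2))) \<partial>lborel)
      \<le> ennreal (c * G * exp ((norm x0 + 2 * r)\<^sup>2) * (8 * exp 1 / r) ^ (2 * N) * fact (Suc N))
        * (\<integral>\<^sup>+x\<in>ball x0 (2 * r). ennreal ((cmod (P x))\<^sup>2 * exp (- ((norm x)\<^sup>2))) \<partial>lborel)"
    by (simp add: B_def mult.assoc)
qed

lemma L2_norm_on_eq_nn_integral:
  fixes f :: "real ^ 'n::finite \<Rightarrow> complex"
  assumes f[measurable]: "f \<in> borel_measurable borel" and S[measurable]: "S \<in> sets borel"
  shows "L2_norm_on S f = sqrt (enn2real (\<integral>\<^sup>+x\<in>S. ennreal ((cmod (f x))\<^sup>2) \<partial>lborel))"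
proof -
  have "(LINT x:S|lborel. (cmod (f x))\<^sup>2)
      = enn2real (\<integral>\<^sup>+x. ennreal (indicator S x *\<^sub>R (cmod (f x))\<^sup>2) \<partial>lborel)"
    unfolding set_lebesgue_integral_def by (rule integral_eq_nn_integral) auto
  also have "(\<integral>\<^sup>+x. ennreal (indicator S x *\<^sub>R (cmod (f x))\<^sup>2) \<partial>lborel)
      = (\<integral>\<^sup>+x\<in>S. ennreal ((cmod (f x))\<^sup>2) \<partial>lborel)"
    by (intro nn_integral_cong) (auto simp: indicator_def)
  finally show ?thesis unfolding L2_norm_on_def by simp
qed

lemma L2_norm_on_nonneg: "0 \<le> L2_norm_on S f"
  unfolding L2_norm_on_def set_lebesgue_integral_def by (simp add: integral_nonneg)

lemma L2_norm_on_le_of_nn_integral_le: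
  fixes f :: "real ^ 'n::finite \<Rightarrow> complex"
  assumes f[measurable]: "f \<in> borel_measurable borel"
    and S[measurable]: "S \<in> sets borel" and T[measurable]: "T \<in> sets borel" and "T \<subseteq> S"
    and M: "0 \<le> M"
    and le: "(\<integral>\<^sup>+x\<in>S. ennreal ((cmod (f x))\<^sup>2) \<partial>lborel)
              \<le> ennreal M * (\<integral>\<^sup>+x\<in>T. ennreal ((cmod (f x))\<^sup>2) \<partial>lborel)"
  shows "L2_norm_on S f \<le> sqrt M * L2_norm_on T f"
proof -
  define IS where "IS = (\<integral>\<^sup>+x\<in>S. ennreal ((cmod (f x))\<^sup>2) \<partial>lborel)"
  define IT where "IT = (\<integral>\<^sup>+x\<in>T. ennreal ((cmod (f x))\<^sup>2) \<partial>lborel)"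
  have "IT \<le> IS"
    unfolding IS_def IT_def using \<open>T \<subseteq> S\<close>
    by (intro nn_integral_mono mult_left_mono) (auto simp: indicator_def)
  show ?thesis
    unfolding L2_norm_on_eq_nn_integral[OF f S] L2_norm_on_eq_nn_integral[OF f T]
      IS_def[symmetric] IT_def[symmetric]
  proof (cases "IS = \<infinity>")
    case False
    then obtain s t where s: "IS = ennreal s" "0 \<le> s" and t: "IT = ennreal t" "0 \<le> t"
      using \<open>IT \<le> IS\<close> by (cases IS; cases IT) (auto simp: top_unique)
    then have "ennreal s \<le> ennreal (M * t)"
      using le M by (simp add: ennreal_mult flip: IS_def IT_def)
    then have "s \<le> M * t"
      using M t by (simp add: ennreal_le_iff)
    then have "sqrt s \<le> sqrt M * sqrt t"
      by (simp flip: real_sqrt_mult)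
    then show "sqrt (enn2real IS) \<le> sqrt M * sqrt (enn2real IT)"
      using s t by simp
  qed (use M in simp)
qed

lemma fact_Suc_le_power: "fact (Suc n) \<le> real (Suc n) ^ n"
proof (induction n)
  case (Suc n)
  have "fact (Suc (Suc n)) = real (Suc (Suc n)) * fact (Suc n)"
    by (rule fact_Suc)
  also have "\<dots> \<le> real (Suc (Suc n)) * real (Suc n) ^ n"
    using Suc by (intro mult_left_mono) auto
  also have "\<dots> \<le> real (Suc (Suc n)) * real (Suc (Suc n)) ^ n"
    by (intro mult_left_mono power_mono) auto
  finally show ?case by simp
qed simp

lemma sqrt_geometric_factorial_le:
  fixes K B :: real
  assumes K: "0 \<le> K" and B: "0 < B"
  obtains C where "C > 1"
    "\<And>N. sqrt (K * B ^ N * real (Suc N) ^ N) \<le> C * exp (1/2 * real N * ln (real N + 1) + C * real N)"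
proof
  define C where "C = max (sqrt K) \<bar>ln (sqrt B)\<bar> + 2"
  show C: "C > 1" by (simp add: C_def)
  fix N
  have "sqrt (real (Suc N) ^ N) = exp (1/2 * real N * ln (real N + 1))"
  proof (rule real_sqrt_unique)
    show "(exp (1/2 * real N * ln (real N + 1)))\<^sup>2 = real (Suc N) ^ N"
      by (simp add: power2_eq_square exp_of_nat_mult add.commute flip: exp_add)
  qed simp
  moreover have "sqrt B ^ N \<le> exp (C * real N)"
  proof -
    have "sqrt B ^ N = exp (real N * ln (sqrt B))"
      using B by (simp add: exp_of_nat_mult)
    also have "\<dots> \<le> exp (C * real N)"
      by (simp add: C_def mult.commute mult_left_mono)
    finally show ?thesis .
  qed
  moreover have "sqrt K \<le> C" by (simp add: C_def)
  ultimately have "sqrt K * sqrt B ^ N * sqrt (real (Suc N) ^ N)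
      \<le> C * exp (C * real N) * exp (1/2 * real N * ln (real N + 1))"
    using B C by (intro mult_mono) auto
  then show "sqrt (K * B ^ N * real (Suc N) ^ N) \<le> C * exp (1/2 * real N * ln (real N + 1) + C * real N)"
    by (simp add: real_sqrt_mult real_sqrt_power exp_add mult_ac)
qed

lemma hermite_space_L2_norm_le:
  fixes x0 :: "real ^ 'n::finite" and \<omega> :: "(real ^ 'n) set"
  assumes r: "0 < r" and \<omega>: "ball x0 (2 * r) \<subseteq> \<omega>" "\<omega> \<in> sets borel"
  obtains K where "0 \<le> K"
    "\<And>N f. f \<in> hermite_space N \<Longrightarrow>
       L2_norm_on UNIV f \<le> sqrt (K * ((8 * exp 1 / r)\<^sup>2) ^ N * real (Suc N) ^ N) * L2_norm_on \<omega> f"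
proof -
  obtain K where K: "0 \<le> K" and estimate: "\<And>N P. continuous_on UNIV P \<Longrightarrow> polynomial_on_lines N P \<Longrightarrow>
      (\<integral>\<^sup>+x. ennreal ((cmod (P x))\<^sup>2 * exp (- ((norm x)\<^sup>2))) \<partial>lborel)
        \<le> ennreal (K * (8 * exp 1 / r) ^ (2 * N) * fact (Suc N))
          * (\<integral>\<^sup>+x\<in>ball x0 (2 * r). ennreal ((cmod (P x))\<^sup>2 * exp (- ((norm x)\<^sup>2))) \<partial>lborel)"
    using nn_integral_line_polynomial_gaussian_le[OF r] by blast
  have "L2_norm_on UNIV f \<le> sqrt (K * ((8 * exp 1 / r)\<^sup>2) ^ N * real (Suc N) ^ N) * L2_norm_on \<omega> f"
    if f_space: "f \<in> hermite_space N" for N f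
  proof -
    obtain P where cont: "continuous_on UNIV P" and lines: "polynomial_on_lines N P"
      and f: "\<And>x. f x = P x * complex_of_real (exp (- ((norm x)\<^sup>2) / 2))"
      using hermite_space_factor[OF f_space] by blast
    have f_meas: "f \<in> borel_measurable borel"
      unfolding f by (intro borel_measurable_continuous_onI continuous_intros cont) auto
    have sq: "(cmod (f x))\<^sup>2 = (cmod (P x))\<^sup>2 * exp (- ((norm x)\<^sup>2))" for x
      by (simp add: f norm_mult power_mult_distrib flip: exp_of_nat_mult)
    define M where "M = K * (8 * exp 1 / r) ^ (2 * N) * fact (Suc N)"
    have "(\<integral>\<^sup>+x\<in>UNIV. ennreal ((cmod (f x))\<^sup>2) \<partial>lborel)
        \<le> ennreal M * (\<integral>\<^sup>+x\<in>ball x0 (2 * r). ennreal ((cmod (f x))\<^sup>2) \<partial>lborel)"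
      using estimate[OF cont lines] by (simp add: sq M_def)
    also have "\<dots> \<le> ennreal M * (\<integral>\<^sup>+x\<in>\<omega>. ennreal ((cmod (f x))\<^sup>2) \<partial>lborel)"
      using \<omega>(1) by (intro mult_left_mono nn_integral_mono) (auto simp: indicator_def)
    finally have "L2_norm_on UNIV f \<le> sqrt M * L2_norm_on \<omega> f"
      using K r \<omega>(2) by (intro L2_norm_on_le_of_nn_integral_le f_meas) (auto simp: M_def)
    also have "\<dots> \<le> sqrt (K * ((8 * exp 1 / r)\<^sup>2) ^ N * real (Suc N) ^ N) * L2_norm_on \<omega> f"
    proof -
      have "M \<le> K * ((8 * exp 1 / r)\<^sup>2) ^ N * real (Suc N) ^ N"
        unfolding M_def power_mult using K r fact_Suc_le_power[of N] by (intro mult_left_mono) auto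
      then show ?thesis
        by (intro mult_right_mono real_sqrt_le_mono L2_norm_on_nonneg)
    qed
    finally show ?thesis .
  qed
  with K that show ?thesis by blast
qed

theorem mainTheorem1:
  fixes \<omega> :: "(real ^ 'n::finite) set"
  assumes "open \<omega>" and "\<omega> \<noteq> {}"
  shows "\<exists>C > 1. \<forall>N. \<forall>f \<in> hermite_space N.
           L2_norm_on UNIV f
             \<le> C * exp (1/2 * real N * ln (real N + 1) + C * real N) * L2_norm_on \<omega> f"
proof -
  obtain x0 e where "0 < e" "ball x0 e \<subseteq> \<omega>"
    using assms open_contains_ball by blast
  then have r: "0 < e / 2" and ball: "ball x0 (2 * (e / 2)) \<subseteq> \<omega>"
    by auto
  obtain K where K: "0 \<le> K" and L2_le: "\<And>N f. f \<in> hermite_space N \<Longrightarrow>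
      L2_norm_on UNIV f \<le> sqrt (K * ((8 * exp 1 / (e / 2))\<^sup>2) ^ N * real (Suc N) ^ N) * L2_norm_on \<omega> f"
    using hermite_space_L2_norm_le[OF r ball] assms(1) by auto
  obtain C where "C > 1" and C: "\<And>N. sqrt (K * ((8 * exp 1 / (e / 2))\<^sup>2) ^ N * real (Suc N) ^ N)
      \<le> C * exp (1/2 * real N * ln (real N + 1) + C * real N)"
    using sqrt_geometric_factorial_le[OF K, of "(8 * exp 1 / (e / 2))\<^sup>2"] r by auto
  have "L2_norm_on UNIV f \<le> C * exp (1/2 * real N * ln (real N + 1) + C * real N) * L2_norm_on \<omega> f"
    if "f \<in> hermite_space N" for N f
    using L2_le[OF that] mult_right_mono[OF C L2_norm_on_nonneg] by (rule order_trans)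
  with \<open>C > 1\<close> show ?thesis by blast
qed

end
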